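(* In the setting below, let $P$ be a positive definite solution of the Covariance Extension Equation $P=\Gamma(P-PH'HP)\Gamma'+\big(u+U(\Sigma+\Gamma PH')\big)\big(u+U(\Sigma+\Gamma PH')\big)'$ with $HPH'<I_\ell$, let $R=(I_\ell-HPH')^{1/2}$ (so $RR'=I_\ell-HPH'$), and let $$A=(\Gamma PH'+\Sigma)-U(\Gamma PH'+\Sigma)-u,\qquad B=(\Gamma PH'+\Sigma)+U(\Gamma PH'+\Sigma)+u.$$ Let $N_n=I_\ell\otimes(0,\dots,0,1)\in\mathbb{R}^{\ell\times\ell n}$ and $A_n=N_nA$, $B_n=N_nB$, $\Sigma_n=N_n\Sigma$. Then $$A_n+B_n=2\Sigma_nRR'.$$
   Context: Setting. $\ell\ge1$, $m\ge0$, positive integers $n_0,\dots,n_m$, $n:=\sum_j n_j-1\ge1$; distinct points $z_0=0,z_1,\dots,z_m$ in the open unit disc; $\ell\times\ell$ matrices $W_{jk}$ ($k=0,\dots,n_j-1$) with $W_{00}=\tfrac12I_\ell$. $W_j$ is the $\ell n_j\times\ell n_j$ block lower-triangular block-Toeplitz matrix with $W_{j0}$ on the block diagonal and $W_{jk}$ on the $k$-th block subdiagonal; $W=\operatorname{diag}(W_0,\dots,W_m)$. $Z_j$ is the $n_j\times n_j$ lower bidiagonal matrix with $z_j$ on the diagonal and $1$ on the subdiagonal; $Z=\operatorname{diag}(Z_0,\dots,Z_m)$. $e\in\mathbb{R}^{n+1}$ stacks the vectors $(1,0,\dots,0)'\in\mathbb{R}^{n_j}$. $T=(W-\tfrac12I)(W+\tfrac12I)^{-1}$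 and $\hat T=T(e\otimes I_\ell)$. With $h_n=(1,0,\dots,0)\in\mathbb{R}^{1\times n}$ and $J_n$ the $n\times n$ shift matrix (ones on the superdiagonal): $H=I_\ell\otimes h_n\in\mathbb{R}^{\ell\times\ell n}$, $J=I_\ell\otimes J_n$. For $k=1,\dots,n$, $N_k=I_\ell\otimes\varepsilon_k$ with $\varepsilon_k\in\mathbb{R}^{1\times n}$ the $k$-th unit row vector; $N=[N_1;\dots;N_n]$; $V=[(Ze)\otimes I_\ell,\dots,(Z^ne)\otimes I_\ell]$; $(VN)^\dagger$ is the Moore–Penrose pseudoinverse of $VN$. $u=(VN)^\dagger\hat T$ and $U$ is the linear map $U(Q)=(VN)^\dagger\big(\sum_{k=1}^nZ^k\otimes(N_kQ)\big)\hat T$ on $\ell n\times\ell$ matrices. $\Sigma\in\mathbb{R}^{\ell n\times\ell}$ is such that $\det(z^nI_\ell+(I_\ell\otimes(z^{n-1},\dots,z,1))\Sigma)$ has all zeros in the open unit disc, and $\Gamma=J-\Sigma H$. A prime denotes transpose and $\otimes$ the Kronecker product. *)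

theory Defs
  imports "Jordan_Normal_Form.Matrix" "Jordan_Normal_Form.Determinant"
begin

(* All matrices are complex matrices of type complex mat (Jordan_Normal_Form);
   real data (H, J, N_k, e, Sigma, ...) are embedded. A prime = plain transpose. *)

definition kron :: "complex mat \<Rightarrow> complex mat \<Rightarrow> complex mat" where
  "kron A B = mat (dim_row A * dim_row B) (dim_col A * dim_col B)
     (\<lambda>(i,j). A $$ (i div dim_row B, j div dim_col B) * B $$ (i mod dim_row B, j mod dim_col B))"

definition conj_tr :: "complex mat \<Rightarrow> complex mat" where
  "conj_tr A = transpose_mat (map_mat cnj A)"

definition pos_def :: "nat \<Rightarrow> complex mat \<Rightarrow> bool" where
  "pos_def d P \<longleftrightarrow> P \<in> carrier_mat d d \<and> conj_tr P = P \<and>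
     (\<forall>v \<in> carrier_vec d. v \<noteq> 0\<^sub>v d \<longrightarrow> Re (map_vec cnj v \<bullet> (P *\<^sub>v v)) > 0)"

definition inv_mat :: "complex mat \<Rightarrow> complex mat" where
  "inv_mat A = (THE B. B \<in> carrier_mat (dim_row A) (dim_row A) \<and> inverts_mat A B \<and> inverts_mat B A)"

definition pinv :: "complex mat \<Rightarrow> complex mat" where
  "pinv A = (THE X. X \<in> carrier_mat (dim_col A) (dim_row A) \<and> A * X * A = A \<and> X * A * X = X
     \<and> conj_tr (A * X) = A * X \<and> conj_tr (X * A) = X * A)"

definition msum :: "nat \<Rightarrow> nat \<Rightarrow> (nat \<Rightarrow> complex mat) \<Rightarrow> nat list \<Rightarrow> complex mat" where
  "msum r c f ks = foldr (\<lambda>k M. f k + M) ks (0\<^sub>m r c)"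

definition nn :: "nat \<Rightarrow> (nat \<Rightarrow> nat) \<Rightarrow> nat" where
  "nn m nj = (\<Sum>j\<le>m. nj j) - 1"

definition Wblk :: "nat \<Rightarrow> (nat \<Rightarrow> nat) \<Rightarrow> (nat \<Rightarrow> nat \<Rightarrow> complex mat) \<Rightarrow> nat \<Rightarrow> complex mat" where
  "Wblk l nj W j = mat (l * nj j) (l * nj j)
     (\<lambda>(r,c). if c div l \<le> r div l then W j (r div l - c div l) $$ (r mod l, c mod l) else 0)"

definition Wmat :: "nat \<Rightarrow> nat \<Rightarrow> (nat \<Rightarrow> nat) \<Rightarrow> (nat \<Rightarrow> nat \<Rightarrow> complex mat) \<Rightarrow> complex mat" where
  "Wmat l m nj W = diag_block_mat (map (Wblk l nj W) [0..<Suc m])"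

definition Zblk :: "(nat \<Rightarrow> nat) \<Rightarrow> (nat \<Rightarrow> complex) \<Rightarrow> nat \<Rightarrow> complex mat" where
  "Zblk nj z j = mat (nj j) (nj j) (\<lambda>(r,c). if r = c then z j else if r = c + 1 then 1 else 0)"

definition Zmat :: "nat \<Rightarrow> (nat \<Rightarrow> nat) \<Rightarrow> (nat \<Rightarrow> complex) \<Rightarrow> complex mat" where
  "Zmat m nj z = diag_block_mat (map (Zblk nj z) [0..<Suc m])"

(* e: stacks (1,0,...,0)' of length n_j, as an (n+1) x 1 matrix *)
definition evec :: "nat \<Rightarrow> (nat \<Rightarrow> nat) \<Rightarrow> complex mat" where
  "evec m nj = mat (\<Sum>j\<le>m. nj j) 1 (\<lambda>(i,_). if \<exists>j\<le>m. i = (\<Sum>k<j. nj k) then 1 else 0)"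

definition Tmat :: "nat \<Rightarrow> nat \<Rightarrow> (nat \<Rightarrow> nat) \<Rightarrow> (nat \<Rightarrow> nat \<Rightarrow> complex mat) \<Rightarrow> complex mat" where
  "Tmat l m nj W = (let d = l * (\<Sum>j\<le>m. nj j) in
     (Wmat l m nj W - (1/2) \<cdot>\<^sub>m 1\<^sub>m d) * inv_mat (Wmat l m nj W + (1/2) \<cdot>\<^sub>m 1\<^sub>m d))"

definition That :: "nat \<Rightarrow> nat \<Rightarrow> (nat \<Rightarrow> nat) \<Rightarrow> (nat \<Rightarrow> nat \<Rightarrow> complex mat) \<Rightarrow> complex mat" where
  "That l m nj W = Tmat l m nj W * kron (evec m nj) (1\<^sub>m l)"

(* unit row vector eps_k in R^{1 x n}, k = 1..n *)
definition epsr :: "nat \<Rightarrow> nat \<Rightarrow> complex mat" where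
  "epsr n k = mat 1 n (\<lambda>(_,c). if c = k - 1 then 1 else 0)"

definition Hmat :: "nat \<Rightarrow> nat \<Rightarrow> complex mat" where
  "Hmat l n = kron (1\<^sub>m l) (epsr n 1)"

definition Jshift :: "nat \<Rightarrow> complex mat" where
  "Jshift n = mat n n (\<lambda>(r,c). if c = r + 1 then 1 else 0)"

definition Jmat :: "nat \<Rightarrow> nat \<Rightarrow> complex mat" where
  "Jmat l n = kron (1\<^sub>m l) (Jshift n)"

definition Nk :: "nat \<Rightarrow> nat \<Rightarrow> nat \<Rightarrow> complex mat" where
  "Nk l n k = kron (1\<^sub>m l) (epsr n k)"

(* N = [N_1; ...; N_n] *)
definition Nmat :: "nat \<Rightarrow> nat \<Rightarrow> complex mat" where
  "Nmat l n = mat (l * n) (l * n) (\<lambda>(r,c). Nk l n (r div l + 1) $$ (r mod l, c))"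

(* V = [(Ze) (x) I, ..., (Z^n e) (x) I] *)
definition Vmat :: "nat \<Rightarrow> nat \<Rightarrow> (nat \<Rightarrow> nat) \<Rightarrow> (nat \<Rightarrow> complex) \<Rightarrow> complex mat" where
  "Vmat l m nj z = (let n = nn m nj in
     mat (l * (n + 1)) (l * n)
       (\<lambda>(r,c). kron ((Zmat m nj z ^\<^sub>m (c div l + 1)) * evec m nj) (1\<^sub>m l) $$ (r, c mod l)))"

definition uvec :: "nat \<Rightarrow> nat \<Rightarrow> (nat \<Rightarrow> nat) \<Rightarrow> (nat \<Rightarrow> complex) \<Rightarrow> (nat \<Rightarrow> nat \<Rightarrow> complex mat) \<Rightarrow> complex mat" where
  "uvec l m nj z W = pinv (Vmat l m nj z * Nmat l (nn m nj)) * That l m nj W"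

definition Umap :: "nat \<Rightarrow> nat \<Rightarrow> (nat \<Rightarrow> nat) \<Rightarrow> (nat \<Rightarrow> complex) \<Rightarrow> (nat \<Rightarrow> nat \<Rightarrow> complex mat)
     \<Rightarrow> complex mat \<Rightarrow> complex mat" where
  "Umap l m nj z W Q = (let n = nn m nj in
     pinv (Vmat l m nj z * Nmat l n)
     * msum (l * (n + 1)) (l * (n + 1))
         (\<lambda>k. kron (Zmat m nj z ^\<^sub>m k) (Nk l n k * Q)) [1..<Suc n]
     * That l m nj W)"

definition charmat :: "nat \<Rightarrow> nat \<Rightarrow> complex mat \<Rightarrow> complex \<Rightarrow> complex mat" where
  "charmat l n S x = x ^ n \<cdot>\<^sub>m 1\<^sub>m l + kron (1\<^sub>m l) (mat 1 n (\<lambda>(_,c). x ^ (n - 1 - c))) * S"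

end

theory Submission
  imports Defs "Jordan_Normal_Form.Gauss_Jordan_Elimination"
begin

(* Since A + B = 2 (\<Gamma> P H' + \<Sigma>), the claim concerns the last block row of \<Gamma> P H' + \<Sigma> only.
   N_n picks the last row of each block of J, which is zero, so N_n \<Gamma> = - \<Sigma>_n H and
   N_n (\<Gamma> P H' + \<Sigma>) = \<Sigma>_n (I - H P H') = \<Sigma>_n R R'.  The one point needing care is that
   u and U(Q) have the right size, i.e. that the Moore-Penrose pseudoinverse exists; it is obtained
   by Penrose's construction from inner inverses, which Gauss-Jordan elimination provides. *)

lemma assoc_mult_mat_dims:
  "dim_col (A::'a::semiring_0 mat) = dim_row B \<Longrightarrow> dim_col B = dim_row C \<Longrightarrow> A * B * C = A * (B * C)"
  by (rule assoc_mult_mat[of A "dim_row A" "dim_col A" B "dim_col B" C "dim_col C"]) auto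

lemma minus_mat_eq_0_imp_eq:
  assumes "X \<in> carrier_mat r c" "Y \<in> carrier_mat r c" "X - Y = 0\<^sub>m r c"
  shows "X = (Y::'a::ab_group_add mat)"
proof (rule eq_matI)
  fix i j assume "i < dim_row Y" "j < dim_col Y"
  hence "X $$ (i, j) - Y $$ (i, j) = (X - Y) $$ (i, j)" using assms(1,2) by simp
  also have "\<dots> = 0" using \<open>i < dim_row Y\<close> \<open>j < dim_col Y\<close> assms by simp
  finally show "X $$ (i, j) = Y $$ (i, j)" by simp
qed (use assms in auto)

lemma conj_tr_carrier [simp]: "A \<in> carrier_mat r c \<Longrightarrow> conj_tr A \<in> carrier_mat c r"
  unfolding conj_tr_def by auto

lemma conj_tr_dims [simp]: "dim_row (conj_tr A) = dim_col A" "dim_col (conj_tr A) = dim_row A"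
  unfolding conj_tr_def by auto

lemma conj_tr_index [simp]:
  "i < dim_col A \<Longrightarrow> j < dim_row A \<Longrightarrow> conj_tr A $$ (i, j) = cnj (A $$ (j, i))"
  unfolding conj_tr_def by auto

lemma conj_tr_conj_tr [simp]: "conj_tr (conj_tr A) = A"
  by (rule eq_matI) auto

lemma conj_tr_mult: "dim_col A = dim_row B \<Longrightarrow> conj_tr (A * B) = conj_tr B * conj_tr A"
  by (rule eq_matI) (auto simp: scalar_prod_def cnj_sum mult.commute intro!: sum.cong)

lemma conj_tr_gram: "conj_tr (conj_tr A * A) = conj_tr A * A"
  by (simp add: conj_tr_mult)

lemma conj_tr_mult_self_eq_0:
  assumes Y: "Y \<in> carrier_mat r c" and "conj_tr Y * Y = 0\<^sub>m c c"
  shows "Y = 0\<^sub>m r c"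
proof (rule eq_matI)
  fix i j assume i: "i < dim_row (0\<^sub>m r c)" and j: "j < dim_col (0\<^sub>m r c)"
  have "(conj_tr Y * Y) $$ (j, j) = of_real (\<Sum>k<r. (cmod (Y $$ (k, j)))\<^sup>2)"
    using Y i j by (auto simp: scalar_prod_def lessThan_atLeast0 of_real_sum intro!: sum.cong)
      (metis complex_norm_square mult.commute of_real_power)
  moreover have "(conj_tr Y * Y) $$ (j, j) = 0" using assms j by simp
  ultimately have "(\<Sum>k<r. (cmod (Y $$ (k, j)))\<^sup>2) = 0" by (metis of_real_eq_0_iff)
  hence "\<forall>k\<in>{..<r}. (cmod (Y $$ (k, j)))\<^sup>2 = 0"
    by (subst sum_nonneg_eq_0_iff[symmetric]) auto
  thus "Y $$ (i, j) = 0\<^sub>m r c $$ (i, j)" using i j by auto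
qed (use Y in auto)

subsection \<open>Inner inverses\<close>

lemma row_echelon_inner_inverse:
  assumes C: "(C::'a::field mat) \<in> carrier_mat nr nc" and p: "pivot_fun C f nc"
  shows "C * mat nc nr (\<lambda>(j, i). if f i = j then 1 else 0) * C = C"
proof -
  define G where "G = mat nc nr (\<lambda>(j, i). if f i = j then (1::'a) else 0)"
  have "dim_row C = nr" using C by simp
  note pv = pivot_funD[OF this p]
  have CG: "(C * G) $$ (i', i) = (if f i < nc \<and> i = i' then 1 else 0)"
    if "i' < nr" "i < nr" for i' i
  proof -
    have "(C * G) $$ (i', i) = (\<Sum>j\<in>{0..<nc}. C $$ (i', j) * (if f i = j then 1 else 0))"
      using that C by (auto simp: G_def scalar_prod_def intro!: sum.cong)
    also have "\<dots> = (if f i < nc then C $$ (i', f i) else 0)"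
      by (auto simp: if_distrib cong: if_cong)
    also have "\<dots> = (if f i < nc \<and> i = i' then 1 else 0)"
      using pv(4)[OF that(2)] pv(5)[OF that(2) _ that(1)] by auto
    finally show ?thesis .
  qed
  show ?thesis unfolding G_def[symmetric]
  proof (rule eq_matI)
    fix i' k assume i': "i' < dim_row C" and k: "k < dim_col C"
    have "(C * G * C) $$ (i', k) = (\<Sum>i\<in>{0..<nr}. (C * G) $$ (i', i) * C $$ (i, k))"
      using i' k C by (auto simp: G_def scalar_prod_def intro!: sum.cong)
    also have "\<dots> = (\<Sum>i\<in>{0..<nr}. if i = i' then (if f i' < nc then C $$ (i', k) else 0) else 0)"
      using i' C by (intro sum.cong) (auto simp: CG)
    also have "\<dots> = (if f i' < nc then C $$ (i', k) else 0)"
      using i' C by (subst sum.delta) auto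
    also have "\<dots> = C $$ (i', k)"
      \<comment> \<open>a row without pivot is a zero row\<close>
      using pv(1)[of i'] pv(2)[of i' k] i' k C by (cases "f i' < nc") auto
    finally show "(C * G * C) $$ (i', k) = C $$ (i', k)" .
  qed (use C in \<open>auto simp: G_def\<close>)
qed

lemma inner_inverse_exists:
  assumes A: "(A::'a::field mat) \<in> carrier_mat nr nc"
  shows "\<exists>G \<in> carrier_mat nc nr. A * G * A = A"
proof -
  obtain C where gj: "gauss_jordan_single A = C" by auto
  note g = gauss_jordan_single[OF A gj]
  obtain P Q where PQ: "C = P * A" "P \<in> carrier_mat nr nr" "Q \<in> carrier_mat nr nr" "Q * P = 1\<^sub>m nr"
    using g(4) by blast
  obtain f where f: "pivot_fun C f nc" using g(2,3) unfolding row_echelon_form_def by auto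
  define G where "G = mat nc nr (\<lambda>(j, i). if f i = j then (1::'a) else 0)"
  have CGC: "C * G * C = C" using row_echelon_inner_inverse[OF g(2) f] unfolding G_def .
  have G: "G \<in> carrier_mat nc nr" unfolding G_def by auto
  have AQC: "A = Q * C"
  proof -
    have "Q * C = (Q * P) * A" unfolding PQ(1) by (rule assoc_mult_mat[symmetric, OF PQ(3) PQ(2) A])
    thus ?thesis using PQ A by simp
  qed
  have "A * (G * P) * A = A * G * (P * A)" using A G PQ(2) by (simp add: assoc_mult_mat_dims)
  also have "\<dots> = Q * C * G * C" unfolding PQ(1)[symmetric] using AQC by simp
  also have "\<dots> = Q * (C * G * C)" using g(2) G PQ(3) by (simp add: assoc_mult_mat_dims)
  also have "\<dots> = A" using CGC AQC by simp
  finally show ?thesis using G PQ by (intro bexI[of _ "G * P"]) auto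
qed

subsection \<open>The Moore-Penrose pseudoinverse\<close>

text \<open>For E = G M - I with M = conj_tr A * A, the identity M E = 0 gives
  conj_tr (A E) (A E) = conj_tr E M E = 0, hence A E = 0.\<close>

lemma gram_inner_inverse_cancel:
  assumes A: "(A::complex mat) \<in> carrier_mat r c" and G: "G \<in> carrier_mat c c"
    and MGM: "conj_tr A * A * G * (conj_tr A * A) = conj_tr A * A"
  shows "A * G * (conj_tr A * A) = A"
proof -
  define M where "M = conj_tr A * A"
  have M: "M \<in> carrier_mat c c" unfolding M_def using A by auto
  define E where "E = G * M - 1\<^sub>m c"
  have E: "E \<in> carrier_mat c c" unfolding E_def using G M by auto
  have ME: "M * E = 0\<^sub>m c c"
  proof -
    have "M * E = M * (G * M) - M * 1\<^sub>m c" unfolding E_def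
      by (rule mult_minus_distrib_mat[OF M mult_carrier_mat[OF G M] one_carrier_mat])
    also have "M * (G * M) = M" using MGM A G unfolding M_def by (simp add: assoc_mult_mat_dims)
    finally show ?thesis using M by simp
  qed
  have "conj_tr (A * E) * (A * E) = conj_tr E * conj_tr A * (A * E)"
    using A E by (simp add: conj_tr_mult)
  also have "\<dots> = conj_tr E * (M * E)"
    unfolding M_def using A E by (simp add: assoc_mult_mat_dims)
  finally have "conj_tr (A * E) * (A * E) = 0\<^sub>m c c" using ME E by simp
  hence "A * E = 0\<^sub>m r c" by (rule conj_tr_mult_self_eq_0[rotated]) (use A E in auto)
  moreover have "A * E = A * (G * M) - A * 1\<^sub>m c" unfolding E_def
    by (rule mult_minus_distrib_mat[OF A mult_carrier_mat[OF G M] one_carrier_mat])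
  ultimately have "A * (G * M) - A = 0\<^sub>m r c" using A by (metis right_mult_one_mat)
  hence "A * (G * M) = A" by (rule minus_mat_eq_0_imp_eq[rotated 2]) (use A G M in auto)
  thus ?thesis unfolding M_def using A G by (simp add: assoc_mult_mat_dims)
qed

lemma gram_inner_inverse_conj_tr:
  assumes A: "(A::complex mat) \<in> carrier_mat r c" and G: "G \<in> carrier_mat c c"
    and MGM: "conj_tr A * A * G * (conj_tr A * A) = conj_tr A * A"
  shows "conj_tr A * A * conj_tr G * (conj_tr A * A) = conj_tr A * A"
proof -
  have "conj_tr (conj_tr A * A * G * (conj_tr A * A)) = conj_tr A * A"
    using MGM conj_tr_gram by simp
  thus ?thesis using A G by (simp add: conj_tr_mult assoc_mult_mat_dims)
qed

lemma gram_inner_inverse_hermitian: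
  assumes A: "(A::complex mat) \<in> carrier_mat r c" and G: "G \<in> carrier_mat c c"
    and MGM: "conj_tr A * A * G * (conj_tr A * A) = conj_tr A * A"
  shows "conj_tr (A * G * conj_tr A) = A * G * conj_tr A"
proof -
  have GH: "conj_tr G \<in> carrier_mat c c" using G by simp
  have AGHM: "A * conj_tr G * (conj_tr A * A) = A"
    by (rule gram_inner_inverse_cancel[OF A GH gram_inner_inverse_conj_tr[OF A G MGM]])
  have "conj_tr (A * conj_tr G * (conj_tr A * A)) = conj_tr A" using AGHM by simp
  hence MGAH: "conj_tr A * A * G * conj_tr A = conj_tr A"
    using A G by (simp add: conj_tr_mult assoc_mult_mat_dims)
  have "A * conj_tr G * conj_tr A = A * conj_tr G * (conj_tr A * A * G * conj_tr A)" using MGAH by simp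
  also have "\<dots> = A * conj_tr G * (conj_tr A * A) * G * conj_tr A"
    using A G by (simp add: assoc_mult_mat_dims)
  also have "\<dots> = A * G * conj_tr A" using AGHM by simp
  finally show ?thesis using A G by (simp add: conj_tr_mult assoc_mult_mat_dims)
qed

definition is_pinv :: "complex mat \<Rightarrow> complex mat \<Rightarrow> bool" where
  "is_pinv A X \<longleftrightarrow> X \<in> carrier_mat (dim_col A) (dim_row A) \<and> A * X * A = A \<and> X * A * X = X
     \<and> conj_tr (A * X) = A * X \<and> conj_tr (X * A) = X * A"

lemma is_pinv_penrose:
  assumes A: "(A::complex mat) \<in> carrier_mat r c"
    and G: "G \<in> carrier_mat c c" "conj_tr A * A * G * (conj_tr A * A) = conj_tr A * A"
    and F: "F \<in> carrier_mat r r" "A * conj_tr A * F * (A * conj_tr A) = A * conj_tr A"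
  shows "is_pinv A (conj_tr A * F * A * G * conj_tr A)"
proof -
  define X where "X = conj_tr A * F * A * G * conj_tr A"
  have AH: "conj_tr A \<in> carrier_mat c r" using A by simp
  have NFN: "conj_tr (conj_tr A) * conj_tr A * F * (conj_tr (conj_tr A) * conj_tr A)
      = conj_tr (conj_tr A) * conj_tr A"
    using F by simp
  have AGM: "A * G * (conj_tr A * A) = A" by (rule gram_inner_inverse_cancel[OF A G])
  have NFA: "A * conj_tr A * F * A = A"
  proof -
    have "conj_tr A * conj_tr F * (A * conj_tr A) = conj_tr A"
      using gram_inner_inverse_cancel[OF AH conj_tr_carrier[OF F(1)]
          gram_inner_inverse_conj_tr[OF AH F(1) NFN]] by simp
    hence "conj_tr (conj_tr A * conj_tr F * (A * conj_tr A)) = A" by simp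
    thus ?thesis using A F by (simp add: conj_tr_mult assoc_mult_mat_dims)
  qed
  have X: "X \<in> carrier_mat c r" unfolding X_def using A F G by auto
  have AX: "A * X = A * G * conj_tr A"
  proof -
    have "A * X = A * conj_tr A * F * A * G * conj_tr A"
      unfolding X_def using A F G by (simp add: assoc_mult_mat_dims)
    thus ?thesis using NFA by simp
  qed
  have XA: "X * A = conj_tr A * F * A"
  proof -
    have "X * A = conj_tr A * F * (A * G * (conj_tr A * A))"
      unfolding X_def using A F G by (simp add: assoc_mult_mat_dims)
    thus ?thesis using AGM by simp
  qed
  have "A * X * A = A" using AX AGM A G by (simp add: assoc_mult_mat_dims)
  moreover have "X * A * X = X"
  proof -
    have "X * A * X = conj_tr A * F * (A * X)" using XA A F X by (simp add: assoc_mult_mat_dims)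
    also have "\<dots> = conj_tr A * F * (A * G * conj_tr A)" using AX by simp
    finally show ?thesis unfolding X_def using A F G by (simp add: assoc_mult_mat_dims)
  qed
  moreover have "conj_tr (A * X) = A * X"
    using AX gram_inner_inverse_hermitian[OF A G] by simp
  moreover have "conj_tr (X * A) = X * A"
    using XA gram_inner_inverse_hermitian[OF AH F(1) NFN] by simp
  ultimately show ?thesis using X A unfolding is_pinv_def X_def by auto
qed

lemma is_pinv_exists:
  assumes A: "(A::complex mat) \<in> carrier_mat r c"
  shows "\<exists>X. is_pinv A X"
proof -
  have "conj_tr A * A \<in> carrier_mat c c" "A * conj_tr A \<in> carrier_mat r r" using A by auto
  from inner_inverse_exists[OF this(1)] inner_inverse_exists[OF this(2)]
  obtain G F where "G \<in> carrier_mat c c" "conj_tr A * A * G * (conj_tr A * A) = conj_tr A * A"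
    and "F \<in> carrier_mat r r" "A * conj_tr A * F * (A * conj_tr A) = A * conj_tr A"
    by blast
  thus ?thesis using is_pinv_penrose[OF A] by blast
qed

lemma is_pinv_unique:
  assumes "is_pinv (A::complex mat) X" "is_pinv A Y"
  shows "X = Y"
proof -
  from assms have X: "X \<in> carrier_mat (dim_col A) (dim_row A)" and Y: "Y \<in> carrier_mat (dim_col A) (dim_row A)"
    and x1: "A * X * A = A" and x2: "X * A * X = X" and x3: "conj_tr (A * X) = A * X"
    and x4: "conj_tr (X * A) = X * A"
    and y1: "A * Y * A = A" and y2: "Y * A * Y = Y" and y3: "conj_tr (A * Y) = A * Y"
    and y4: "conj_tr (Y * A) = Y * A"
    unfolding is_pinv_def by auto
  have "X = X * A * Y"
  proof -
    have "X = X * (A * X)" using x2 X by (simp add: assoc_mult_mat_dims)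
    also have "\<dots> = X * (conj_tr X * conj_tr A)" using x3 X by (simp add: conj_tr_mult)
    also have "conj_tr A = conj_tr A * conj_tr Y * conj_tr A"
      using y1 Y by (metis conj_tr_mult assoc_mult_mat_dims carrier_matD conj_tr_dims index_mult_mat(2,3))
    also have "X * (conj_tr X * (conj_tr A * conj_tr Y * conj_tr A))
        = X * (conj_tr (A * X) * conj_tr (A * Y))"
      using X Y by (simp add: conj_tr_mult assoc_mult_mat_dims)
    also have "\<dots> = X * A * X * A * Y" using x3 y3 X Y by (simp add: assoc_mult_mat_dims)
    also have "\<dots> = X * A * Y" using x2 by simp
    finally show ?thesis .
  qed
  moreover have "Y = X * A * Y"
  proof -
    have "Y = conj_tr (Y * A) * Y" using y2 y4 by simp
    also have "\<dots> = conj_tr A * conj_tr Y * Y" using Y by (simp add: conj_tr_mult)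
    also have "conj_tr A = conj_tr A * conj_tr X * conj_tr A"
      using x1 X by (metis conj_tr_mult assoc_mult_mat_dims carrier_matD conj_tr_dims index_mult_mat(2,3))
    also have "conj_tr A * conj_tr X * conj_tr A * conj_tr Y * Y = conj_tr (X * A) * conj_tr (Y * A) * Y"
      using X Y by (simp add: conj_tr_mult assoc_mult_mat_dims)
    also have "\<dots> = X * A * (Y * A * Y)" using x4 y4 X Y by (simp add: assoc_mult_mat_dims)
    also have "\<dots> = X * A * Y" using y2 by simp
    finally show ?thesis .
  qed
  ultimately show ?thesis by simp
qed

lemma pinv_carrier:
  assumes "(A::complex mat) \<in> carrier_mat r c"
  shows "pinv A \<in> carrier_mat c r"
proof -
  have "is_pinv A (pinv A)"
    unfolding pinv_def is_pinv_def[symmetric]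
    using theI'[of "is_pinv A"] is_pinv_exists[OF assms] is_pinv_unique by blast
  thus ?thesis using assms unfolding is_pinv_def by auto
qed

subsection \<open>The last block row\<close>

lemma Nk_last_mult_Jmat:
  assumes n: "n \<ge> 1"
  shows "Nk l n n * Jmat l n = 0\<^sub>m l (l * n)"
proof (rule eq_matI)
  fix i c assume i: "i < dim_row (0\<^sub>m l (l * n))" and c: "c < dim_col (0\<^sub>m l (l * n))"
  have "(Nk l n n * Jmat l n) $$ (i, c) = (\<Sum>k\<in>{0..<l * n}. Nk l n n $$ (i, k) * Jmat l n $$ (k, c))"
    using i c by (auto simp: scalar_prod_def Nk_def Jmat_def kron_def epsr_def Jshift_def intro!: sum.cong)
  also have "\<dots> = 0"
  proof (rule sum.neutral, rule ballI)
    fix k assume k: "k \<in> {0..<l * n}"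
    have "k div n < l" "c div n < l"
      using k c by (auto simp: less_mult_imp_div_less mult.commute)
    moreover have "c mod n \<noteq> n" using n by (simp add: less_imp_neq)
    ultimately show "Nk l n n $$ (i, k) * Jmat l n $$ (k, c) = 0"
      using i c k n by (auto simp: Nk_def Jmat_def kron_def epsr_def Jshift_def)
  qed
  finally show "(Nk l n n * Jmat l n) $$ (i, c) = 0\<^sub>m l (l * n) $$ (i, c)" using i c by simp
qed (auto simp: Nk_def Jmat_def kron_def epsr_def Jshift_def)

lemma Nk_last_mult_gain:
  fixes l n :: nat and Sigma P :: "complex mat"
  defines "H \<equiv> Hmat l n"
  assumes n: "n \<ge> 1" and Sigma: "Sigma \<in> carrier_mat (l * n) l" and P: "P \<in> carrier_mat (l * n) (l * n)"
  shows "Nk l n n * ((Jmat l n - Sigma * H) * P * transpose_mat H + Sigma)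
    = Nk l n n * Sigma * (1\<^sub>m l - H * P * transpose_mat H)"
proof -
  define S where "S = Nk l n n * Sigma"
  define K where "K = H * P * transpose_mat H"
  have H: "H \<in> carrier_mat l (l * n)" unfolding H_def Hmat_def kron_def epsr_def by auto
  have J: "Jmat l n \<in> carrier_mat (l * n) (l * n)" unfolding Jmat_def kron_def Jshift_def by auto
  have N: "Nk l n n \<in> carrier_mat l (l * n)" unfolding Nk_def kron_def epsr_def by auto
  have S: "S \<in> carrier_mat l l" and K: "K \<in> carrier_mat l l"
    unfolding S_def K_def using N Sigma H P by auto
  have "Nk l n n * (Jmat l n - Sigma * H) = Nk l n n * Jmat l n - Nk l n n * (Sigma * H)"
    by (rule mult_minus_distrib_mat[OF N J]) (use Sigma H in auto)
  also have "\<dots> = 0\<^sub>m l (l * n) - S * H"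
    unfolding Nk_last_mult_Jmat[OF n] S_def using N Sigma H by (simp add: assoc_mult_mat_dims)
  finally have NGamma: "Nk l n n * (Jmat l n - Sigma * H) = 0\<^sub>m l (l * n) - S * H" .
  have "Nk l n n * ((Jmat l n - Sigma * H) * P * transpose_mat H + Sigma)
      = Nk l n n * ((Jmat l n - Sigma * H) * P * transpose_mat H) + S"
    unfolding S_def by (rule mult_add_distrib_mat[OF N]) (use J Sigma H P in auto)
  also have "Nk l n n * ((Jmat l n - Sigma * H) * P * transpose_mat H)
      = (0\<^sub>m l (l * n) - S * H) * (P * transpose_mat H)"
    unfolding NGamma[symmetric] using N J Sigma H P by (simp add: assoc_mult_mat_dims)
  also have "\<dots> = 0\<^sub>m l (l * n) * (P * transpose_mat H) - S * H * (P * transpose_mat H)"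
    by (rule minus_mult_distrib_mat) (use S H P in auto)
  also have "S * H * (P * transpose_mat H) = S * K"
    unfolding K_def using S H P by (simp add: assoc_mult_mat_dims)
  also have "0\<^sub>m l (l * n) * (P * transpose_mat H) - S * K + S = S * 1\<^sub>m l - S * K"
    by (rule eq_matI) (use S K P H in auto)
  also have "\<dots> = S * (1\<^sub>m l - K)" by (rule mult_minus_distrib_mat[OF S one_carrier_mat K, symmetric])
  finally show ?thesis unfolding S_def K_def .
qed

lemma minus_minus_add_add_mat:
  assumes "Y \<in> carrier_mat r c" "V \<in> carrier_mat r c" "w \<in> carrier_mat r c"
  shows "(Y - V - w) + (Y + V + w) = 2 \<cdot>\<^sub>m (Y :: 'a::comm_ring_1 mat)"
proof (rule eq_matI)
  fix i j assume ij: "i < dim_row (2 \<cdot>\<^sub>m Y)" "j < dim_col (2 \<cdot>\<^sub>m Y)"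
  have "(Y - V - w + (Y + V + w)) $$ (i, j)
      = (Y $$ (i, j) - V $$ (i, j) - w $$ (i, j)) + (Y $$ (i, j) + V $$ (i, j) + w $$ (i, j))"
    using assms ij by simp
  also have "\<dots> = 2 * Y $$ (i, j)" by (simp add: algebra_simps)
  finally show "(Y - V - w + (Y + V + w)) $$ (i, j) = (2 \<cdot>\<^sub>m Y) $$ (i, j)"
    using ij by simp
qed (use assms in auto)

theorem lemma5:
  fixes l m :: nat and nj :: "nat \<Rightarrow> nat" and z :: "nat \<Rightarrow> complex"
    and W :: "nat \<Rightarrow> nat \<Rightarrow> complex mat" and Sigma P R :: "complex mat"
  defines "n \<equiv> nn m nj"
  defines "H \<equiv> Hmat l n"
    and "Gamma \<equiv> Jmat l n - Sigma * Hmat l n"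
    and "u \<equiv> uvec l m nj z W"
    and "U \<equiv> Umap l m nj z W"
  defines "A \<equiv> (Gamma * P * transpose_mat H + Sigma) - U (Gamma * P * transpose_mat H + Sigma) - u"
    and "B \<equiv> (Gamma * P * transpose_mat H + Sigma) + U (Gamma * P * transpose_mat H + Sigma) + u"
    and "Nn \<equiv> Nk l n n"
  assumes l_pos: "l \<ge> 1"
    and nj_pos: "\<forall>j\<le>m. nj j > 0"
    and n_pos: "n \<ge> 1"
    and z0: "z 0 = 0"
    and z_disc: "\<forall>j\<le>m. cmod (z j) < 1"
    and z_dist: "\<forall>i\<le>m. \<forall>j\<le>m. i \<noteq> j \<longrightarrow> z i \<noteq> z j"
    and W_dim: "\<forall>j\<le>m. \<forall>k<nj j. W j k \<in> carrier_mat l l"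
    and W00: "W 0 0 = (1/2) \<cdot>\<^sub>m 1\<^sub>m l"
    and W_inv: "invertible_mat (Wmat l m nj W + (1/2) \<cdot>\<^sub>m 1\<^sub>m (l * (n + 1)))"
    and Sigma_dim: "Sigma \<in> carrier_mat (l * n) l"
    and Sigma_real: "\<forall>i<l * n. \<forall>j<l. Im (Sigma $$ (i, j)) = 0"
    and Sigma_stable: "\<forall>x. det (charmat l n Sigma x) = 0 \<longrightarrow> cmod x < 1"
    and P_pd: "pos_def (l * n) P"
    and CEE: "P = Gamma * (P - P * transpose_mat H * H * P) * transpose_mat Gamma
              + (u + U (Sigma + Gamma * P * transpose_mat H))
                * transpose_mat (u + U (Sigma + Gamma * P * transpose_mat H))"
    and HPH: "pos_def l (1\<^sub>m l - H * P * transpose_mat H)"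
    and R_dim: "R \<in> carrier_mat l l"
    and R_sq: "R * transpose_mat R = 1\<^sub>m l - H * P * transpose_mat H"
  shows "Nn * A + Nn * B = 2 \<cdot>\<^sub>m (Nn * Sigma * R * transpose_mat R)"
proof -
  define Y where "Y = Gamma * P * transpose_mat H + Sigma"
  have P: "P \<in> carrier_mat (l * n) (l * n)" using P_pd unfolding pos_def_def by auto
  have N: "Nn \<in> carrier_mat l (l * n)" unfolding Nn_def Nk_def kron_def epsr_def by auto
  have Y: "Y \<in> carrier_mat (l * n) l"
    unfolding Y_def Gamma_def H_def Hmat_def Jmat_def kron_def using P Sigma_dim by auto
  have "pinv (Vmat l m nj z * Nmat l n) \<in> carrier_mat (l * n) (l * (n + 1))"
    by (rule pinv_carrier) (auto simp: Vmat_def Nmat_def Let_def n_def[symmetric])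
  moreover have "dim_col (That l m nj W) = l" unfolding That_def kron_def evec_def by simp
  ultimately have u: "u \<in> carrier_mat (l * n) l" and UY: "U Y \<in> carrier_mat (l * n) l"
    unfolding u_def uvec_def U_def Umap_def Let_def n_def[symmetric] by auto
  have "Nn * A + Nn * B = Nn * (A + B)"
    unfolding A_def B_def Y_def[symmetric]
    by (rule mult_add_distrib_mat[OF N, symmetric]) (use Y u UY in auto)
  also have "\<dots> = 2 \<cdot>\<^sub>m (Nn * Y)"
    unfolding A_def B_def Y_def[symmetric] minus_minus_add_add_mat[OF Y UY u]
    by (rule mult_smult_distrib[OF N Y])
  also have "Nn * Y = Nn * Sigma * (R * transpose_mat R)"
    unfolding Y_def Gamma_def Nn_def R_sq H_def
    by (rule Nk_last_mult_gain[OF n_pos Sigma_dim P])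
  also have "\<dots> = Nn * Sigma * R * transpose_mat R"
    using N Sigma_dim R_dim by (simp add: assoc_mult_mat_dims)
  finally show ?thesis .
qed

end
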